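(* Let $l\ge 1$ and let $X_l,\dots,X_1$ be nonempty sets. Then the monoid $M(X_l)\circ\cdots\circ M(X_1)$ is isomorphic to the monoid $\mathrm{Ell}(r_0,T(|X_l|,\dots,|X_1|))$; an isomorphism is given by restricting an elliptic contraction to the set of leaves $X_l\times\cdots\times X_1$.
   Context: Rooted tree, depth, father/son and elliptic contraction: a rooted tree $(r_0,T)$ is a tree with a distinguished vertex $r_0$; $\mathrm{dep}(v)=d_T(r_0,v)$ (geodesic distance); an elliptic contraction is a map on vertices which does not increase geodesic distance and preserves depth. $\mathrm{Ell}(r_0,T)$ is the monoid of all elliptic contractions of $(r_0,T)$ into itself under composition (maps written on the right). $T(n_l,\dots,n_1)$ is the rooted uniformly branching tree of depth $l$ in which every vertex at depth $i-1$ has exactly $n_i$ sons; its vertex set is represented as $\{r_0\}\cup\bigcup_{i=1}^l X_i\times\cdots\times X_1$ with $|X_i|=n_i$, where $(x_i,\dots,x_1)$ is a son of $(x_{i-1},\dots,x_1)$ and each $(x_1)$ is a son of $r_0$. For $X=X_l\times\cdots\times X_1$, let $\pi_{[i,1]}:X\to X_i\times\cdots\times X_1$ be the projection on the last $i$ components. $M(X_l)\circ\cdots\circ M(X_1)$ denotes the monoid (under composition) of all full transformations $\varphi$ of $X_l\times\cdots\times X_1$ that are sequential: for every $i$, if $x,x'$ have the same last $i$ components then so do $x\varphi$ and $x'\varphi$. *)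

theory Defs
  imports "HOL-Library.FuncSet" "HOL-Algebra.Group"
begin

text \<open>Vertices of T(|X_l|,...,|X_1|): the root is [] and a vertex at depth i is the
list [x_1, ..., x_i] with x_j in X j (components stored from depth 1 downwards, i.e.
the tuple (x_i,...,x_1) of the paper is stored reversed).\<close>

definition tverts :: "(nat \<Rightarrow> 'a set) \<Rightarrow> nat \<Rightarrow> 'a list set" where
  "tverts X l = {xs. length xs \<le> l \<and> (\<forall>j < length xs. xs ! j \<in> X (Suc j))}"

definition tleaves :: "(nat \<Rightarrow> 'a set) \<Rightarrow> nat \<Rightarrow> 'a list set" where
  "tleaves X l = {xs \<in> tverts X l. length xs = l}"

definition tadj :: "(nat \<Rightarrow> 'a set) \<Rightarrow> nat \<Rightarrow> 'a list \<Rightarrow> 'a list \<Rightarrow> bool" where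
  "tadj X l u v \<longleftrightarrow> u \<in> tverts X l \<and> v \<in> tverts X l \<and>
     (\<exists>x. v = u @ [x] \<or> u = v @ [x])"

definition tdist :: "(nat \<Rightarrow> 'a set) \<Rightarrow> nat \<Rightarrow> 'a list \<Rightarrow> 'a list \<Rightarrow> nat" where
  "tdist X l u v = (LEAST n. \<exists>ps. length ps = Suc n \<and> ps ! 0 = u \<and> ps ! n = v \<and>
       (\<forall>i < n. tadj X l (ps ! i) (ps ! Suc i)))"

definition tdep :: "(nat \<Rightarrow> 'a set) \<Rightarrow> nat \<Rightarrow> 'a list \<Rightarrow> nat" where
  "tdep X l v = tdist X l [] v"

definition Ell :: "(nat \<Rightarrow> 'a set) \<Rightarrow> nat \<Rightarrow> ('a list \<Rightarrow> 'a list) set" where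
  "Ell X l = {f \<in> tverts X l \<rightarrow>\<^sub>E tverts X l.
     (\<forall>u \<in> tverts X l. \<forall>v \<in> tverts X l. tdist X l (f u) (f v) \<le> tdist X l u v) \<and>
     (\<forall>v \<in> tverts X l. tdep X l (f v) = tdep X l v)}"

text \<open>Maps written on the right: x(f g) = (x f) g.\<close>
definition Ell_monoid :: "(nat \<Rightarrow> 'a set) \<Rightarrow> nat \<Rightarrow> ('a list \<Rightarrow> 'a list) monoid" where
  "Ell_monoid X l = \<lparr>carrier = Ell X l,
     mult = (\<lambda>f g. compose (tverts X l) g f), one = restrict id (tverts X l)\<rparr>"

text \<open>Sequential transformations of X_l x ... x X_1; "the last i components" of
(x_l,...,x_1) are (x_i,...,x_1), i.e. take i of our list.\<close>
definition Seq :: "(nat \<Rightarrow> 'a set) \<Rightarrow> nat \<Rightarrow> ('a list \<Rightarrow> 'a list) set" where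
  "Seq X l = {\<phi> \<in> tleaves X l \<rightarrow>\<^sub>E tleaves X l.
     \<forall>i \<le> l. \<forall>x \<in> tleaves X l. \<forall>x' \<in> tleaves X l.
        take i x = take i x' \<longrightarrow> take i (\<phi> x) = take i (\<phi> x')}"

definition Seq_monoid :: "(nat \<Rightarrow> 'a set) \<Rightarrow> nat \<Rightarrow> ('a list \<Rightarrow> 'a list) monoid" where
  "Seq_monoid X l = \<lparr>carrier = Seq X l,
     mult = (\<lambda>f g. compose (tleaves X l) g f), one = restrict id (tleaves X l)\<rparr>"

end

theory Submission
  imports Defs
begin

(* Writing lcp u v for the length of the longest common prefix, the
   geodesic distance is |u| + |v| - 2 lcp u v: a walk must climb to the common ancestor and
   descend again.  Hence a depth-preserving map does not increase distances iff it does not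
   decrease lcp, and a map of leaves is sequential iff it does not decrease lcp; both
   monoids are monoids of lcp-nondecreasing self-maps under composition.
   An elliptic contraction is determined by its leaves, since f v is the length-|v| prefix
   of f x for any leaf x below v.  Conversely a sequential map phi extends to an elliptic
   contraction by the same recipe (leaves below each vertex exist because every X_i is
   nonempty).  So restriction to the leaves is a bijective homomorphism. *)

fun lcp :: "'a list \<Rightarrow> 'a list \<Rightarrow> nat" where
  "lcp (x#xs) (y#ys) = (if x = y then Suc (lcp xs ys) else 0)"
| "lcp _ _ = 0"

lemma lcp_le1: "lcp u v \<le> length u"
  by (induction u v rule: lcp.induct) auto

lemma lcp_le2: "lcp u v \<le> length v"
  by (induction u v rule: lcp.induct) auto

lemma lcp_self: "lcp v v = length v"
  by (induction v) auto

lemma lcp_sym: "lcp u v = lcp v u"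
  by (induction u v rule: lcp.induct) auto

lemma take_lcp: "take (lcp u v) u = take (lcp u v) v"
  by (induction u v rule: lcp.induct) auto

lemma take_eq_if_le_lcp: "i \<le> lcp u v \<Longrightarrow> take i u = take i v"
  by (metis take_lcp min.absorb1 take_take)

lemma take_eq_iff_le_lcp:
  assumes "i \<le> length u" "i \<le> length v"
  shows "take i u = take i v \<longleftrightarrow> i \<le> lcp u v"
proof
  show "take i u = take i v \<Longrightarrow> i \<le> lcp u v"
    using assms
  proof (induction u v arbitrary: i rule: lcp.induct)
    case (1 x xs y ys)
    then show ?case by (cases i) auto
  qed auto
  show "i \<le> lcp u v \<Longrightarrow> take i u = take i v"
    by (rule take_eq_if_le_lcp)
qed

lemma lcp_snoc: "lcp u v \<le> lcp (u @ [x]) v \<and> lcp (u @ [x]) v \<le> Suc (lcp u v)"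
proof (induction u arbitrary: v)
  case Nil
  then show ?case by (cases v) auto
next
  case (Cons a u)
  then show ?case by (cases v) auto
qed

definition lcp_mono :: "'a list set \<Rightarrow> ('a list \<Rightarrow> 'a list) \<Rightarrow> bool" where
  "lcp_mono V f \<longleftrightarrow> (\<forall>u \<in> V. \<forall>v \<in> V. lcp u v \<le> lcp (f u) (f v))"

lemma lcp_mono_comp:
  assumes "f \<in> V \<rightarrow> V" "lcp_mono V f" "lcp_mono V g"
  shows "lcp_mono V (compose V g f)"
  unfolding lcp_mono_def
proof (intro ballI)
  fix u v assume u: "u \<in> V" and v: "v \<in> V"
  have "lcp u v \<le> lcp (f u) (f v)" using assms(2) u v unfolding lcp_mono_def by blast
  also have "\<dots> \<le> lcp (g (f u)) (g (f v))"
    using assms u v unfolding lcp_mono_def by blast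
  finally show "lcp u v \<le> lcp (compose V g f u) (compose V g f v)"
    using u v by (simp add: compose_eq)
qed

section \<open>Walks and the distance formula\<close>

inductive walk :: "(nat \<Rightarrow> 'a set) \<Rightarrow> nat \<Rightarrow> nat \<Rightarrow> 'a list \<Rightarrow> 'a list \<Rightarrow> bool"
  for X l where
  walk_nil: "walk X l 0 u u"
| walk_step: "tadj X l u w \<Longrightarrow> walk X l n w v \<Longrightarrow> walk X l (Suc n) u v"

lemma walk_iff_path:
  "walk X l n u v \<longleftrightarrow> (\<exists>ps. length ps = Suc n \<and> ps ! 0 = u \<and> ps ! n = v \<and>
       (\<forall>i < n. tadj X l (ps ! i) (ps ! Suc i)))"
proof
  show "walk X l n u v \<Longrightarrow> \<exists>ps. length ps = Suc n \<and> ps ! 0 = u \<and> ps ! n = v \<and>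
       (\<forall>i < n. tadj X l (ps ! i) (ps ! Suc i))"
  proof (induction rule: walk.induct)
    case (walk_nil u)
    show ?case by (intro exI[of _ "[u]"]) auto
  next
    case (walk_step u w n v)
    then obtain ps where ps: "length ps = Suc n" "ps ! 0 = w" "ps ! n = v"
      "\<forall>i < n. tadj X l (ps ! i) (ps ! Suc i)" by blast
    show ?case
    proof (intro exI[of _ "u # ps"] conjI allI impI)
      fix i assume "i < Suc n"
      then show "tadj X l ((u # ps) ! i) ((u # ps) ! Suc i)"
        using ps walk_step(1) by (cases i) auto
    qed (use ps in auto)
  qed
next
  assume "\<exists>ps. length ps = Suc n \<and> ps ! 0 = u \<and> ps ! n = v \<and>
       (\<forall>i < n. tadj X l (ps ! i) (ps ! Suc i))"
  then obtain ps where ps: "length ps = Suc n" "\<forall>i < n. tadj X l (ps ! i) (ps ! Suc i)"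
    and ends: "ps ! 0 = u" "ps ! n = v" by blast
  from ps have "walk X l n (ps ! 0) (ps ! n)"
  proof (induction n arbitrary: ps)
    case 0
    then show ?case by (auto intro: walk_nil)
  next
    case (Suc n)
    then obtain a ps' where ps: "ps = a # ps'" by (cases ps) auto
    have "walk X l n (ps' ! 0) (ps' ! n)"
      using Suc.IH[of ps'] Suc.prems ps by force
    moreover have "tadj X l a (ps' ! 0)" using Suc.prems(2) ps by force
    ultimately show ?case using ps by (auto intro: walk_step)
  qed
  then show "walk X l n u v" using ends by simp
qed

lemma tdist_walk: "tdist X l u v = (LEAST n. walk X l n u v)"
  unfolding tdist_def walk_iff_path ..

lemma walk_trans: "walk X l m u w \<Longrightarrow> walk X l n w v \<Longrightarrow> walk X l (m + n) u v"
  by (induction rule: walk.induct) (auto intro: walk_step)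

lemma walk_sym: "walk X l n u v \<Longrightarrow> walk X l n v u"
proof (induction rule: walk.induct)
  case (walk_nil u)
  show ?case by (rule walk_nil)
next
  case (walk_step u w n v)
  have "tadj X l w u" using walk_step(1) unfolding tadj_def by blast
  then have "walk X l 1 w u" by (auto intro: walk.intros)
  from walk_trans[OF walk_step(3) this] show ?case by simp
qed

lemma take_tverts: "v \<in> tverts X l \<Longrightarrow> take k v \<in> tverts X l"
  unfolding tverts_def by auto

lemma walk_from_ancestor:
  assumes "v \<in> tverts X l" "k \<le> length v"
  shows "walk X l (length v - k) (take k v) v"
  using assms
proof (induction "length v - k" arbitrary: k)
  case 0
  then show ?case by (auto intro: walk_nil)
next
  case (Suc d)
  then have k: "k < length v" by simp
  have "d = length v - Suc k" using Suc.hyps(2) by simp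
  then have "walk X l d (take (Suc k) v) v" using Suc.hyps(1) Suc.prems(1) k by simp
  moreover have "take (Suc k) v = take k v @ [v ! k]"
    using k by (simp add: take_Suc_conv_app_nth)
  then have "tadj X l (take k v) (take (Suc k) v)"
    unfolding tadj_def using take_tverts[OF Suc.prems(1)] by blast
  ultimately show ?case using Suc.hyps(2) by (metis walk_step)
qed

text \<open>Potential used for the lower bound: the distance to t in the formula below.  It
  changes by at most one along each edge.\<close>
definition dist_potential :: "'a list \<Rightarrow> 'a list \<Rightarrow> int" where
  "dist_potential t w = int (length w) + int (length t) - 2 * int (lcp w t)"

lemma walk_potential:
  "walk X l n u v \<Longrightarrow> dist_potential t u \<le> int n + dist_potential t v"
proof (induction rule: walk.induct)
  case (walk_step u w n v)
  obtain x where "w = u @ [x] \<or> u = w @ [x]" using walk_step(1) unfolding tadj_def by blast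
  then have "dist_potential t u \<le> dist_potential t w + 1"
    using lcp_snoc[of u t x] lcp_snoc[of w t x] unfolding dist_potential_def by auto
  then show ?case using walk_step.IH by simp
qed simp

text \<open>Distance formula: go up from u to the common ancestor, then down to v.\<close>
theorem tdist_formula:
  assumes "u \<in> tverts X l" "v \<in> tverts X l"
  shows "tdist X l u v = length u + length v - 2 * lcp u v"
proof -
  let ?c = "lcp u v"
  have c: "?c \<le> length u" "?c \<le> length v" using lcp_le1 lcp_le2 by auto
  have up: "walk X l (length u - ?c) u (take ?c u)"
    using walk_sym[OF walk_from_ancestor[OF assms(1) c(1)]] .
  have down: "walk X l (length v - ?c) (take ?c u) v"
    using walk_from_ancestor[OF assms(2) c(2)] take_lcp[of u v] by simp
  have "walk X l (length u + length v - 2 * ?c) u v"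
    using walk_trans[OF up down] c by (simp add: mult_2)
  moreover have "length u + length v - 2 * ?c \<le> n" if "walk X l n u v" for n
    using walk_potential[OF that, of v] lcp_self[of v] lcp_sym[of u v]
    unfolding dist_potential_def by auto
  ultimately show ?thesis unfolding tdist_walk by (intro Least_equality) auto
qed

lemma tverts_len: "v \<in> tverts X l \<Longrightarrow> length v \<le> l"
  unfolding tverts_def by auto

lemma tdep_eq: "v \<in> tverts X l \<Longrightarrow> tdep X l v = length v"
proof -
  have "[] \<in> tverts X l" unfolding tverts_def by simp
  then show "v \<in> tverts X l \<Longrightarrow> tdep X l v = length v"
    unfolding tdep_def using tdist_formula by fastforce
qed

lemma tleaves_sub: "tleaves X l \<subseteq> tverts X l"
  unfolding tleaves_def by auto

lemma tleaves_len: "x \<in> tleaves X l \<Longrightarrow> length x = l"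
  unfolding tleaves_def by auto

section \<open>Characterisations by common prefixes\<close>

lemma tdist_le_iff_lcp:
  assumes "u \<in> tverts X l" "v \<in> tverts X l" "u' \<in> tverts X l" "v' \<in> tverts X l"
    and "length u' = length u" "length v' = length v"
  shows "tdist X l u' v' \<le> tdist X l u v \<longleftrightarrow> lcp u v \<le> lcp u' v'"
  using assms tdist_formula[OF assms(1,2)] tdist_formula[OF assms(3,4)]
    lcp_le1[of u v] lcp_le2[of u v] lcp_le1[of u' v'] lcp_le2[of u' v']
  by linarith

lemma Ell_iff:
  "f \<in> Ell X l \<longleftrightarrow> f \<in> tverts X l \<rightarrow>\<^sub>E tverts X l \<and>
     (\<forall>v \<in> tverts X l. length (f v) = length v) \<and> lcp_mono (tverts X l) f"
proof (cases "f \<in> tverts X l \<rightarrow>\<^sub>E tverts X l")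
  case True
  then have fV: "\<And>v. v \<in> tverts X l \<Longrightarrow> f v \<in> tverts X l" by auto
  have "(\<forall>v \<in> tverts X l. tdep X l (f v) = tdep X l v) \<longleftrightarrow>
        (\<forall>v \<in> tverts X l. length (f v) = length v)"
    using fV tdep_eq by metis
  moreover have "(\<forall>u \<in> tverts X l. \<forall>v \<in> tverts X l. tdist X l (f u) (f v) \<le> tdist X l u v)
      \<longleftrightarrow> lcp_mono (tverts X l) f"
    if len: "\<forall>v \<in> tverts X l. length (f v) = length v"
    unfolding lcp_mono_def
  proof (intro ball_cong refl)
    fix u v assume "u \<in> tverts X l" "v \<in> tverts X l"
    then show "tdist X l (f u) (f v) \<le> tdist X l u v \<longleftrightarrow> lcp u v \<le> lcp (f u) (f v)"
      using tdist_le_iff_lcp fV len by blast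
  qed
  ultimately show ?thesis using True unfolding Ell_def by blast
qed (simp add: Ell_def)

lemma Seq_iff:
  "\<phi> \<in> Seq X l \<longleftrightarrow> \<phi> \<in> tleaves X l \<rightarrow>\<^sub>E tleaves X l \<and> lcp_mono (tleaves X l) \<phi>"
proof (cases "\<phi> \<in> tleaves X l \<rightarrow>\<^sub>E tleaves X l")
  case True
  have "(\<forall>i \<le> l. take i x = take i x' \<longrightarrow> take i (\<phi> x) = take i (\<phi> x')) \<longleftrightarrow>
        lcp x x' \<le> lcp (\<phi> x) (\<phi> x')"
    if x: "x \<in> tleaves X l" and x': "x' \<in> tleaves X l" for x x'
  proof -
    have "\<phi> x \<in> tleaves X l" "\<phi> x' \<in> tleaves X l" using True x x' by auto
    then have lens: "length x = l" "length x' = l" "length (\<phi> x) = l" "length (\<phi> x') = l"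
      using x x' tleaves_len by auto
    show ?thesis
    proof
      assume seq: "\<forall>i \<le> l. take i x = take i x' \<longrightarrow> take i (\<phi> x) = take i (\<phi> x')"
      have "lcp x x' \<le> l" using lcp_le1[of x x'] lens by simp
      then have "take (lcp x x') (\<phi> x) = take (lcp x x') (\<phi> x')"
        using seq take_lcp[of x x'] by blast
      then show "lcp x x' \<le> lcp (\<phi> x) (\<phi> x')"
        using take_eq_iff_le_lcp[of "lcp x x'" "\<phi> x" "\<phi> x'"] lens \<open>lcp x x' \<le> l\<close>
        by simp
    next
      assume mono: "lcp x x' \<le> lcp (\<phi> x) (\<phi> x')"
      show "\<forall>i \<le> l. take i x = take i x' \<longrightarrow> take i (\<phi> x) = take i (\<phi> x')"
      proof (intro allI impI)
        fix i assume "i \<le> l" "take i x = take i x'"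
        then have "i \<le> lcp x x'" using take_eq_iff_le_lcp[of i x x'] lens by simp
        then show "take i (\<phi> x) = take i (\<phi> x')"
          using mono by (intro take_eq_if_le_lcp) simp
      qed
    qed
  qed
  moreover have "\<phi> \<in> Seq X l \<longleftrightarrow> (\<forall>x \<in> tleaves X l. \<forall>x' \<in> tleaves X l.
      \<forall>i \<le> l. take i x = take i x' \<longrightarrow> take i (\<phi> x) = take i (\<phi> x'))"
    using True unfolding Seq_def by blast
  ultimately show ?thesis using True unfolding lcp_mono_def by simp
qed (simp add: Seq_def)

lemma monoid_of_self_maps:
  assumes maps: "S \<subseteq> V \<rightarrow>\<^sub>E V" and one: "restrict id V \<in> S"
    and comp: "\<And>f g. f \<in> S \<Longrightarrow> g \<in> S \<Longrightarrow> compose V g f \<in> S"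
  shows "monoid \<lparr>carrier = S, mult = (\<lambda>f g. compose V g f), one = restrict id V\<rparr>"
proof (rule monoidI, unfold monoid.simps partial_object.simps)
  fix f g h assume "f \<in> S" "g \<in> S" "h \<in> S"
  then have "f \<in> V \<rightarrow> V" using maps by auto
  then show "compose V h (compose V g f) = compose V (compose V h g) f"
    by (rule compose_assoc)
next
  fix f assume "f \<in> S"
  then have "f \<in> V \<rightarrow>\<^sub>E V" using maps by auto
  then show "compose V f (restrict id V) = f" "compose V (restrict id V) f = f"
    by (auto simp: fun_eq_iff compose_def PiE_iff extensional_def)
qed (use one comp in auto)

lemma monoid_Ell_monoid: "monoid (Ell_monoid X l)"
  unfolding Ell_monoid_def
proof (rule monoid_of_self_maps)
  show "Ell X l \<subseteq> tverts X l \<rightarrow>\<^sub>E tverts X l" by (auto simp: Ell_iff)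
  show "restrict id (tverts X l) \<in> Ell X l" by (auto simp: Ell_iff lcp_mono_def)
  fix f g assume "f \<in> Ell X l" "g \<in> Ell X l"
  then show "compose (tverts X l) g f \<in> Ell X l"
    unfolding Ell_iff
    by (auto simp: compose_eq PiE_iff Pi_iff compose_extensional intro!: lcp_mono_comp)
qed

lemma monoid_Seq_monoid: "monoid (Seq_monoid X l)"
  unfolding Seq_monoid_def
proof (rule monoid_of_self_maps)
  show "Seq X l \<subseteq> tleaves X l \<rightarrow>\<^sub>E tleaves X l" by (auto simp: Seq_iff)
  show "restrict id (tleaves X l) \<in> Seq X l" by (auto simp: Seq_iff lcp_mono_def)
  fix f g assume "f \<in> Seq X l" "g \<in> Seq X l"
  then show "compose (tleaves X l) g f \<in> Seq X l"
    unfolding Seq_iff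
    by (auto simp: compose_eq PiE_iff Pi_iff compose_extensional intro!: lcp_mono_comp)
qed

section \<open>Elliptic contractions are determined by their leaves\<close>

lemma exists_leaf_below:
  assumes ne: "\<forall>i\<in>{1..l}. X i \<noteq> {}" and v: "v \<in> tverts X l"
  shows "\<exists>x \<in> tleaves X l. take (length v) x = v"
proof -
  define x where "x = v @ map (\<lambda>j. SOME a. a \<in> X (Suc j)) [length v..<l]"
  have lx: "length x = l" unfolding x_def using tverts_len[OF v] by simp
  have "x ! j \<in> X (Suc j)" if j: "j < length x" for j
  proof (cases "j < length v")
    case True
    then show ?thesis using v unfolding x_def tverts_def by (simp add: nth_append)
  next
    case False
    then have "x ! j = (SOME a. a \<in> X (Suc j))" unfolding x_def using j lx
      by (simp add: nth_append)
    moreover have "X (Suc j) \<noteq> {}" using ne j lx by auto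
    ultimately show ?thesis by (simp add: some_in_eq)
  qed
  then have "x \<in> tleaves X l" unfolding tleaves_def tverts_def using lx by simp
  moreover have "take (length v) x = v" unfolding x_def by simp
  ultimately show ?thesis by blast
qed

lemma Ell_prefix_of_leaf:
  assumes f: "f \<in> Ell X l" and v: "v \<in> tverts X l" and x: "x \<in> tleaves X l"
    and below: "take (length v) x = v"
  shows "f v = take (length v) (f x)"
proof -
  have xV: "x \<in> tverts X l" using x tleaves_sub by blast
  have lens: "length v \<le> length x" using tleaves_len[OF x] tverts_len[OF v] by simp
  have "length v \<le> lcp v x" using take_eq_iff_le_lcp[of "length v" v x] below lens by simp
  also have "\<dots> \<le> lcp (f v) (f x)" using f v xV unfolding Ell_iff lcp_mono_def by blast
  finally have "take (length v) (f v) = take (length v) (f x)"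
    by (rule take_eq_if_le_lcp)
  moreover have "length (f v) = length v" using f v unfolding Ell_iff by blast
  ultimately show ?thesis by simp
qed

lemma Ell_restrict_Seq:
  assumes "f \<in> Ell X l"
  shows "restrict f (tleaves X l) \<in> Seq X l"
proof -
  have "f x \<in> tleaves X l" if x: "x \<in> tleaves X l" for x
  proof -
    have "x \<in> tverts X l" using x tleaves_sub by blast
    then have "f x \<in> tverts X l" "length (f x) = length x"
      using assms unfolding Ell_iff by auto
    then show ?thesis using tleaves_len[OF x] unfolding tleaves_def by simp
  qed
  moreover have "lcp_mono (tleaves X l) f"
    using assms tleaves_sub unfolding Ell_iff lcp_mono_def by blast
  ultimately show ?thesis unfolding Seq_iff lcp_mono_def by auto
qed

lemma restrict_hom: "(\<lambda>f. restrict f (tleaves X l)) \<in> hom (Ell_monoid X l) (Seq_monoid X l)"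
proof (rule homI, unfold Ell_monoid_def Seq_monoid_def monoid.simps partial_object.simps)
  fix f g assume f: "f \<in> Ell X l" and g: "g \<in> Ell X l"
  have "f x \<in> tleaves X l" if "x \<in> tleaves X l" for x
    using Ell_restrict_Seq[OF f] that unfolding Seq_iff by auto
  then show "restrict (compose (tverts X l) g f) (tleaves X l) =
             compose (tleaves X l) (restrict g (tleaves X l)) (restrict f (tleaves X l))"
    using tleaves_sub by (auto simp: fun_eq_iff compose_def)
qed (rule Ell_restrict_Seq)

lemma restrict_inj:
  assumes "\<forall>i\<in>{1..l}. X i \<noteq> {}"
  shows "inj_on (\<lambda>f. restrict f (tleaves X l)) (Ell X l)"
proof (rule inj_onI)
  fix f g assume f: "f \<in> Ell X l" and g: "g \<in> Ell X l"
    and eq: "restrict f (tleaves X l) = restrict g (tleaves X l)"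
  have "f v = g v" if v: "v \<in> tverts X l" for v
  proof -
    obtain x where x: "x \<in> tleaves X l" "take (length v) x = v"
      using exists_leaf_below[OF assms v] by blast
    have "f x = g x" using fun_cong[OF eq, of x] x(1) by simp
    then show ?thesis using Ell_prefix_of_leaf[OF f v x] Ell_prefix_of_leaf[OF g v x] by simp
  qed
  moreover have "f \<in> extensional (tverts X l)" "g \<in> extensional (tverts X l)"
    using f g unfolding Ell_iff by (auto simp: PiE_iff)
  ultimately show "f = g" using extensionalityI by metis
qed

section \<open>Extending sequential maps to the tree\<close>

definition leaf_below :: "(nat \<Rightarrow> 'a set) \<Rightarrow> nat \<Rightarrow> 'a list \<Rightarrow> 'a list" where
  "leaf_below X l v = (SOME x. x \<in> tleaves X l \<and> take (length v) x = v)"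

definition seq_extend ::
    "(nat \<Rightarrow> 'a set) \<Rightarrow> nat \<Rightarrow> ('a list \<Rightarrow> 'a list) \<Rightarrow> 'a list \<Rightarrow> 'a list" where
  "seq_extend X l \<phi> = (\<lambda>v \<in> tverts X l. take (length v) (\<phi> (leaf_below X l v)))"

lemma leaf_below_spec:
  assumes "\<forall>i\<in>{1..l}. X i \<noteq> {}" "v \<in> tverts X l"
  shows "leaf_below X l v \<in> tleaves X l" "take (length v) (leaf_below X l v) = v"
  using someI_ex[OF exists_leaf_below[OF assms, unfolded Bex_def]]
  unfolding leaf_below_def by blast+

lemma seq_extend_Ell:
  assumes ne: "\<forall>i\<in>{1..l}. X i \<noteq> {}" and phi: "\<phi> \<in> Seq X l"
  shows "seq_extend X l \<phi> \<in> Ell X l"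
proof -
  let ?V = "tverts X l" and ?L = "tleaves X l" and ?e = "leaf_below X l"
  let ?f = "seq_extend X l \<phi>"
  have phiL: "\<phi> x \<in> ?L" if "x \<in> ?L" for x using phi that unfolding Seq_iff by auto
  have f_len: "length (?f v) = length v" if v: "v \<in> ?V" for v
    using tleaves_len[OF phiL[OF leaf_below_spec(1)[OF ne v]]] tverts_len[OF v] v
    by (simp add: seq_extend_def)
  have "?f v \<in> ?V" if v: "v \<in> ?V" for v
  proof -
    have "\<phi> (?e v) \<in> ?V" using phiL leaf_below_spec(1)[OF ne v] tleaves_sub by blast
    then show ?thesis using v take_tverts by (simp add: seq_extend_def)
  qed
  then have "?f \<in> ?V \<rightarrow>\<^sub>E ?V" by (auto simp: seq_extend_def)
  moreover have "lcp u v \<le> lcp (?f u) (?f v)" if u: "u \<in> ?V" and v: "v \<in> ?V" for u v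
  proof -
    let ?c = "lcp u v"
    have cu: "?c \<le> length u" and cv: "?c \<le> length v" using lcp_le1 lcp_le2 by auto
    have eu: "?e u \<in> ?L" and ev: "?e v \<in> ?L" using leaf_below_spec(1)[OF ne] u v by auto
    have "take ?c (?e u) = take ?c (?e v)"
      using leaf_below_spec(2)[OF ne u] leaf_below_spec(2)[OF ne v] take_lcp[of u v] cu cv
      by (metis min.absorb1 take_take)
    moreover have "?c \<le> l" using cu tverts_len[OF u] by simp
    ultimately have "?c \<le> lcp (?e u) (?e v)"
      using take_eq_iff_le_lcp[of ?c "?e u" "?e v"] tleaves_len[OF eu] tleaves_len[OF ev]
      by simp
    also have "\<dots> \<le> lcp (\<phi> (?e u)) (\<phi> (?e v))"
      using phi eu ev unfolding Seq_iff lcp_mono_def by blast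
    finally have "take ?c (\<phi> (?e u)) = take ?c (\<phi> (?e v))"
      by (rule take_eq_if_le_lcp)
    then have "take ?c (?f u) = take ?c (?f v)"
      using u v cu cv by (simp add: seq_extend_def min_absorb1 min_absorb2)
    then show ?thesis using take_eq_iff_le_lcp[of ?c "?f u" "?f v"] f_len u v cu cv by simp
  qed
  ultimately show ?thesis unfolding Ell_iff lcp_mono_def using f_len by blast
qed

text \<open>On the leaves the extension agrees with phi, since the only leaf below a leaf is
  itself.\<close>
lemma restrict_seq_extend:
  assumes ne: "\<forall>i\<in>{1..l}. X i \<noteq> {}" and phi: "\<phi> \<in> Seq X l"
  shows "restrict (seq_extend X l \<phi>) (tleaves X l) = \<phi>"
proof (rule extensionalityI[of _ "tleaves X l"])
  show "restrict (seq_extend X l \<phi>) (tleaves X l) \<in> extensional (tleaves X l)" by simp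
  show "\<phi> \<in> extensional (tleaves X l)" using phi unfolding Seq_iff by (auto simp: PiE_iff)
  fix x assume x: "x \<in> tleaves X l"
  then have xV: "x \<in> tverts X l" using tleaves_sub by auto
  have lx: "length x = l" using tleaves_len[OF x] .
  have "length (leaf_below X l x) = l" using tleaves_len leaf_below_spec(1)[OF ne xV] by blast
  then have "leaf_below X l x = x" using leaf_below_spec(2)[OF ne xV] lx by simp
  moreover have "length (\<phi> x) = l" using phi x tleaves_len unfolding Seq_iff by auto
  ultimately have "seq_extend X l \<phi> x = \<phi> x" using xV lx by (simp add: seq_extend_def)
  then show "restrict (seq_extend X l \<phi>) (tleaves X l) x = \<phi> x" using x by simp
qed

theorem proposition3p4:
  fixes X :: "nat \<Rightarrow> 'a set" and l :: nat
  assumes "l \<ge> 1" and "\<forall>i \<in> {1..l}. X i \<noteq> {}"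
  shows "monoid (Ell_monoid X l) \<and> monoid (Seq_monoid X l) \<and>
         (\<lambda>f. restrict f (tleaves X l)) \<in> iso (Ell_monoid X l) (Seq_monoid X l)"
proof (intro conjI monoid_Ell_monoid monoid_Seq_monoid)
  let ?r = "\<lambda>f. restrict f (tleaves X l)"
  have "?r ` Ell X l \<subseteq> Seq X l" using Ell_restrict_Seq by blast
  moreover have "Seq X l \<subseteq> ?r ` Ell X l"
    using seq_extend_Ell[OF assms(2)] restrict_seq_extend[OF assms(2)] by (metis image_eqI subsetI)
  ultimately have "bij_betw ?r (Ell X l) (Seq X l)"
    using restrict_inj[OF assms(2)] unfolding bij_betw_def by blast
  then show "?r \<in> iso (Ell_monoid X l) (Seq_monoid X l)"
    using restrict_hom unfolding iso_def by (simp add: Ell_monoid_def Seq_monoid_def)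
qed

end
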